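(* Let $(X,T)$ be a minimal topological dynamical system with $T$ a homeomorphism, and suppose $\delta>0$ is such that $(X,T)$ is block $\mathcal{F}_{ip}$-sensitive with sensitive constant $10\delta$. Let $x\in X$ and let $U$ be any neighborhood of $x$. Then there are $z\in U$ and $y\in X$ such that $(y,z)\in\mathbf{RP}^{[\infty]}(X)$ and $d(z,y)\ge\delta$.
   Context: A topological dynamical system: compact metric space $(X,d)$ with continuous surjection $T$; minimal means every orbit is dense. A finite IP-set of length $n$ is $FS((p_i)_{i=1}^n)=\{\sum_{i\in\alpha}p_i:\emptyset\ne\alpha\subset\{1,\dots,n\}\}$ with $p_i\in\mathbb{N}$. $(X,T)$ is block $\mathcal{F}_{ip}$-sensitive with sensitive constant $c>0$ if for each $x\in X$, each neighborhood $U$ of $x$ and each $l\in\mathbb{N}$ there is $y_l\in U$ such that $\{n\in\mathbb{Z}_+:d(T^nx,T^ny_l)>c\}$ contains a finite IP-set of length $l$. For $d\in\mathbb{N}$, $(x,y)\in\mathbf{RP}^{[d]}(X)$ if for every $\eta>0$ there are $x',y'$ and $\mathbf{n}\in\mathbb{Z}^d$ with $d(x,x')<\eta$, $d(y,y')<\eta$, $d(T^{\mathbf{n}\cdot\varepsilon}x',T^{\mathbf{n}\cdot\varepsilon}y')<\eta$ for all $\varepsilon\in\{0,1\}^d\setminus\{0\}$; $\mathbf{RP}^{[\infty]}=\bigcap_d\mathbf{RP}^{[d]}$. *)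

theory Defs
  imports "HOL-Analysis.Analysis"
begin

definition tds :: "'a::metric_space set \<Rightarrow> ('a \<Rightarrow> 'a) \<Rightarrow> bool" where
  "tds X T \<longleftrightarrow> compact X \<and> X \<noteq> {} \<and> continuous_on X T \<and> T ` X = X"

definition minimal_sys :: "'a::metric_space set \<Rightarrow> ('a \<Rightarrow> 'a) \<Rightarrow> bool" where
  "minimal_sys X T \<longleftrightarrow> (\<forall>x\<in>X. X \<subseteq> closure {(T ^^ n) x | n. True})"

definition ipow :: "'a set \<Rightarrow> ('a \<Rightarrow> 'a) \<Rightarrow> int \<Rightarrow> 'a \<Rightarrow> 'a" where
  "ipow X T n = (if n \<ge> 0 then T ^^ nat n else (inv_into X T) ^^ nat (- n))"

definition FS :: "(nat \<Rightarrow> nat) \<Rightarrow> nat \<Rightarrow> nat set" where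
  "FS p n = {(\<Sum>i\<in>\<alpha>. p i) | \<alpha>. \<alpha> \<noteq> {} \<and> \<alpha> \<subseteq> {0..<n}}"

definition contains_finite_IP :: "nat set \<Rightarrow> nat \<Rightarrow> bool" where
  "contains_finite_IP A l \<longleftrightarrow> (\<exists>p. (\<forall>i<l. p i \<ge> 1) \<and> FS p l \<subseteq> A)"

definition block_Fip_sensitive :: "'a::metric_space set \<Rightarrow> ('a \<Rightarrow> 'a) \<Rightarrow> real \<Rightarrow> bool" where
  "block_Fip_sensitive X T c \<longleftrightarrow> c > 0 \<and>
     (\<forall>x\<in>X. \<forall>U. open U \<and> x \<in> U \<longrightarrow> (\<forall>l::nat.
        \<exists>y\<in>U \<inter> X. contains_finite_IP {n. dist ((T ^^ n) x) ((T ^^ n) y) > c} l))"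

text \<open>Regionally proximal relation of order d; vectors in Z^d are functions on {0..<d},
  and epsilon in {0,1}^d minus 0 is encoded as a nonempty subset S of {0..<d}.\<close>
definition RP :: "'a::metric_space set \<Rightarrow> ('a \<Rightarrow> 'a) \<Rightarrow> nat \<Rightarrow> ('a \<times> 'a) set" where
  "RP X T d = {(x, y). x \<in> X \<and> y \<in> X \<and> (\<forall>\<eta>>0. \<exists>x'\<in>X. \<exists>y'\<in>X. \<exists>n::nat \<Rightarrow> int.
      dist x x' < \<eta> \<and> dist y y' < \<eta> \<and>
      (\<forall>S. S \<subseteq> {0..<d} \<and> S \<noteq> {} \<longrightarrow>
         dist (ipow X T (\<Sum>i\<in>S. n i) x') (ipow X T (\<Sum>i\<in>S. n i) y') < \<eta>))}"

definition RP_inf :: "'a::metric_space set \<Rightarrow> ('a \<Rightarrow> 'a) \<Rightarrow> ('a \<times> 'a) set" where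
  "RP_inf X T = (\<Inter>d\<in>{1..}. RP X T d)"

end

(*
  Take y close to x whose times of 10\<delta>-separation from x contain a long finite IP-set
  FS(p_1, ..., p_n), and colour each index set A by the pair of \<eta>-cells containing
  T^{p_A} x and T^{p_A} y. Folkman's theorem yields disjoint nonempty blocks D_0, ..., D_d all of
  whose unions have one colour; with q = p_{D_0} and n_i = p_{D_i}, both (T^q x, x) and
  (T^q y, y) stay \<eta>-close along all vertices n\<cdot>\<epsilon> of the cube. Since T^q x and T^q y are
  10\<delta> apart while x and y are \<delta>-close, one of these pairs is \<delta>-far apart, and its second
  point lies near x. Letting d \<rightarrow> \<infinity> and \<eta> \<rightarrow> 0, a convergent subsequence in the compact
  space X \<times> X gives a pair in RP^[\<infinity>].
*)
theory Submission
  imports Defs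
begin

section \<open>Folkman's theorem for finite unions\<close>

definition disjoint_blocks :: "nat \<Rightarrow> 'a set \<Rightarrow> (nat \<Rightarrow> 'a set) \<Rightarrow> bool" where
  "disjoint_blocks k I D \<longleftrightarrow> (\<forall>i<k. D i \<noteq> {} \<and> D i \<subseteq> I) \<and> disjoint_family_on D {..<k}"

lemma disjoint_blocks_Suc:
  "disjoint_blocks (Suc k) I D \<longleftrightarrow>
     disjoint_blocks k I D \<and> D k \<noteq> {} \<and> D k \<subseteq> I \<and> (\<forall>i<k. D i \<inter> D k = {})"
proof -
  have "disjoint_family_on D {..<Suc k} \<longleftrightarrow>
      disjoint_family_on D {..<k} \<and> (\<forall>i<k. D i \<inter> D k = {})"
    unfolding lessThan_Suc by (subst disjoint_family_on_insert) auto
  then show ?thesis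
    unfolding disjoint_blocks_def All_less_Suc by blast
qed

lemma disjoint_blocks_mono: "disjoint_blocks k I D \<Longrightarrow> I \<subseteq> I' \<Longrightarrow> disjoint_blocks k I' D"
  unfolding disjoint_blocks_def by blast

lemma disjoint_blocks_cong:
  "disjoint_blocks k I D \<Longrightarrow> (\<And>i. i < k \<Longrightarrow> D' i = D i) \<Longrightarrow> disjoint_blocks k I D'"
  unfolding disjoint_blocks_def disjoint_family_on_def by simp

lemma disjoint_blocks_Union_subset:
  "disjoint_blocks k I D \<Longrightarrow> S \<subseteq> {..<k} \<Longrightarrow> \<Union>(D ` S) \<subseteq> I"
  unfolding disjoint_blocks_def by blast

lemma disjoint_blocks_reindex:
  assumes "disjoint_blocks K I D" "inj_on h {..<k}" "h ` {..<k} \<subseteq> {..<K}"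
  shows "disjoint_blocks k I (D \<circ> h)"
proof -
  have "D (h i) \<noteq> {} \<and> D (h i) \<subseteq> I" if "i < k" for i
    using assms(1,3) that unfolding disjoint_blocks_def by auto
  moreover have "D (h i) \<inter> D (h j) = {}" if "i < k" "j < k" "i \<noteq> j" for i j
  proof -
    have "h i \<noteq> h j" "h i < K" "h j < K"
      using assms(2,3) that unfolding inj_on_def by auto
    then show ?thesis
      using assms(1) unfolding disjoint_blocks_def disjoint_family_on_def by simp
  qed
  ultimately show ?thesis
    unfolding disjoint_blocks_def disjoint_family_on_def by simp
qed

lemma disjoint_blocks_compose:
  assumes "disjoint_blocks k {..<m} D" "disjoint_blocks m I G"
  shows "disjoint_blocks k I (\<lambda>i. \<Union>(G ` D i))"
proof -
  have "\<Union>(G ` D i) \<noteq> {} \<and> \<Union>(G ` D i) \<subseteq> I" if "i < k" for i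
  proof -
    have Di: "D i \<noteq> {}" "D i \<subseteq> {..<m}"
      using assms(1) \<open>i < k\<close> unfolding disjoint_blocks_def by auto
    have G: "\<forall>t<m. G t \<noteq> {} \<and> G t \<subseteq> I"
      using assms(2) unfolding disjoint_blocks_def by auto
    obtain t where "t \<in> D i" using Di by blast
    then have "G t \<noteq> {}" "G t \<subseteq> \<Union>(G ` D i)" using Di G by auto
    moreover have "\<Union>(G ` D i) \<subseteq> I" using Di G by blast
    ultimately show ?thesis by blast
  qed
  moreover have "\<Union>(G ` D i) \<inter> \<Union>(G ` D j) = {}" if "i < k" "j < k" "i \<noteq> j" for i j
  proof -
    have "G a \<inter> G b = {}" if "a \<in> D i" "b \<in> D j" for a b
    proof -
      have "D i \<inter> D j = {}" "D i \<subseteq> {..<m}" "D j \<subseteq> {..<m}"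
        using assms(1) \<open>i < k\<close> \<open>j < k\<close> \<open>i \<noteq> j\<close>
        unfolding disjoint_blocks_def disjoint_family_on_def by auto
      then have "a \<noteq> b" "a < m" "b < m" using that by auto
      then show ?thesis
        using assms(2) unfolding disjoint_blocks_def disjoint_family_on_def by simp
    qed
    then show ?thesis by blast
  qed
  ultimately show ?thesis
    unfolding disjoint_blocks_def disjoint_family_on_def by simp
qed

lemma sum_Union_disjoint_blocks:
  assumes "disjoint_blocks k I D" "finite I" "S \<subseteq> {..<k}"
  shows "sum p (\<Union>(D ` S)) = (\<Sum>j\<in>S. sum p (D j))"
proof (rule sum.UNION_disjoint)
  show "finite S"
    using assms(3) finite_subset by blast
  show "\<forall>j\<in>S. finite (D j)"
    using assms finite_subset unfolding disjoint_blocks_def by blast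
  show "\<forall>i\<in>S. \<forall>j\<in>S. i \<noteq> j \<longrightarrow> D i \<inter> D j = {}"
    using assms(1,3) unfolding disjoint_blocks_def disjoint_family_on_def by blast
qed

lemma pigeonhole_atMost:
  assumes "f ` {..r} \<subseteq> C" "finite C" "card C \<le> r"
  obtains k k' where "k < k'" "k' \<le> r" "f k = f k'"
proof -
  have "card (f ` {..r}) < card {..r}"
    using card_mono[OF assms(2,1)] assms(3) by simp
  then have "\<not> inj_on f {..r}"
    by (rule pigeonhole)
  then show ?thesis
    using that unfolding inj_on_def by (metis atMost_iff linorder_neqE_nat)
qed

lemma finite_set_strict_chain:
  assumes "finite A"
  obtains E where "\<And>k. k \<le> card A \<Longrightarrow> E k \<subseteq> A"
    "\<And>k k'. k < k' \<Longrightarrow> k' \<le> card A \<Longrightarrow> E k \<subset> E k'"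
proof -
  obtain e where e: "bij_betw e {..<card A} A"
    using ex_bij_betw_nat_finite[OF assms] by (auto simp: atLeast0LessThan)
  have sub: "e ` {..<k} \<subseteq> A" if "k \<le> card A" for k
    using e that unfolding bij_betw_def by auto
  have strict: "e ` {..<k} \<subset> e ` {..<k'}" if "k < k'" "k' \<le> card A" for k k'
  proof -
    have "inj_on e {..<card A}" "k < card A"
      using e that unfolding bij_betw_def by auto
    then have "e k \<notin> e ` {..<k}"
      by (simp add: inj_on_image_mem_iff)
    then show ?thesis
      using that by auto
  qed
  show ?thesis
    by (rule that[of "\<lambda>k. e ` {..<k}", OF sub strict])
qed

lemma nat_recoding:
  assumes "finite (f ` A)"
  obtains g :: "'a \<Rightarrow> nat"
  where "card (g ` A) = card (f ` A)" "\<And>a b. a \<in> A \<Longrightarrow> b \<in> A \<Longrightarrow> g a = g b \<longleftrightarrow> f a = f b"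
proof
  have inj: "inj_on (to_nat_on (f ` A)) (f ` A)"
    using assms by (intro inj_on_to_nat_on countable_finite)
  show "card ((to_nat_on (f ` A) \<circ> f) ` A) = card (f ` A)"
    using card_image[OF inj] by (simp add: image_comp)
  show "(to_nat_on (f ` A) \<circ> f) a = (to_nat_on (f ` A) \<circ> f) b \<longleftrightarrow> f a = f b"
    if "a \<in> A" "b \<in> A" for a b
    using inj that by (auto simp: inj_on_def)
qed

definition monochromatic_cube ::
    "('a set \<Rightarrow> 'c) \<Rightarrow> 'a set \<Rightarrow> 'a set \<Rightarrow> (nat \<Rightarrow> 'a set) \<Rightarrow> nat \<Rightarrow> bool" where
  "monochromatic_cube \<theta> I F G L \<longleftrightarrow>
     F \<subseteq> I \<and> disjoint_blocks L (I - F) G \<and> (\<forall>J\<subseteq>{..<L}. \<theta> (F \<union> \<Union>(G ` J)) = \<theta> F)"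

lemma monochromatic_cube_coarsen:
  assumes cube: "monochromatic_cube \<theta> I F G L"
    and coarser: "\<And>B B'. B \<subseteq> I \<Longrightarrow> B' \<subseteq> I \<Longrightarrow> \<theta> B = \<theta> B' \<Longrightarrow> \<theta>' B = \<theta>' B'"
  shows "monochromatic_cube \<theta>' I F G L"
proof -
  have F: "F \<subseteq> I" and G: "disjoint_blocks L (I - F) G"
    and mono: "\<forall>J\<subseteq>{..<L}. \<theta> (F \<union> \<Union>(G ` J)) = \<theta> F"
    using cube unfolding monochromatic_cube_def by auto
  have "\<theta>' (F \<union> \<Union>(G ` J)) = \<theta>' F" if "J \<subseteq> {..<L}" for J
  proof (rule coarser)
    show "F \<union> \<Union>(G ` J) \<subseteq> I"
      using F disjoint_blocks_Union_subset[OF G that] by blast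
  qed (use F mono that in auto)
  with F G show ?thesis
    unfolding monochromatic_cube_def by blast
qed

lemma monochromatic_cube_Suc:
  assumes "A \<subset> A'" "A' \<subseteq> I - P" "P \<subseteq> I"
    and cube: "monochromatic_cube (\<lambda>B. \<theta> (A \<union> B)) P F G L"
    and cube': "monochromatic_cube (\<lambda>B. \<theta> (A' \<union> B)) P F G L"
    and same_colour: "\<theta> (A \<union> F) = \<theta> (A' \<union> F)"
  shows "monochromatic_cube \<theta> I (A \<union> F) (G(L := A' - A)) (Suc L)"
proof -
  have F: "F \<subseteq> P" and G: "disjoint_blocks L (P - F) G"
    using cube unfolding monochromatic_cube_def by auto
  have "A \<inter> P = {}" using assms(1,2) by blast
  then have "disjoint_blocks L (I - (A \<union> F)) G"
    using G \<open>P \<subseteq> I\<close> unfolding disjoint_blocks_def by blast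
  then have "disjoint_blocks L (I - (A \<union> F)) (G(L := A' - A))"
    unfolding disjoint_blocks_def disjoint_family_on_def by simp
  moreover have "G i \<inter> (A' - A) = {}" if "i < L" for i
    using G that assms(2) unfolding disjoint_blocks_def by blast
  ultimately have blocks: "disjoint_blocks (Suc L) (I - (A \<union> F)) (G(L := A' - A))"
    using assms(1-3) F unfolding disjoint_blocks_Suc by auto
  have colour: "\<theta> (A \<union> F \<union> \<Union>((G(L := A' - A)) ` J)) = \<theta> (A \<union> F)" if J: "J \<subseteq> {..<Suc L}" for J
  proof (cases "L \<in> J")
    case False
    then have "J \<subseteq> {..<L}" using J by (auto simp: less_Suc_eq)
    moreover have "\<Union>((G(L := A' - A)) ` J) = \<Union>(G ` J)" using False by auto
    ultimately show ?thesis using cube unfolding monochromatic_cube_def by (simp add: Un_assoc)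
  next
    case True
    have "J - {L} \<subseteq> {..<L}" using J by auto
    moreover have "A \<union> F \<union> \<Union>((G(L := A' - A)) ` J) = A' \<union> (F \<union> \<Union>(G ` (J - {L})))"
      using True \<open>A \<subset> A'\<close> by auto
    ultimately show ?thesis
      using cube' same_colour unfolding monochromatic_cube_def by simp
  qed
  have "A \<union> F \<subseteq> I"
    using assms(1-3) F by blast
  with blocks colour show ?thesis
    unfolding monochromatic_cube_def by simp
qed

(* Split off r points of I, listed as a chain E 0 \<subset> ... \<subset> E r. A cube on the rest for the
   colouring B \<mapsto> (\<theta> (E k \<union> B))_{k \<le> r}, plus two indices k < k' with
   \<theta> (E k \<union> F) = \<theta> (E k' \<union> F), gives a cube with the extra direction E k' - E k. *)
lemma monochromatic_cube_step:
  fixes \<theta> :: "'a set \<Rightarrow> nat"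
  assumes IH: "\<And>(P::'a set) (\<psi>::'a set \<Rightarrow> nat). finite P \<Longrightarrow> n \<le> card P \<Longrightarrow>
      card (\<psi> ` Pow P) \<le> r ^ Suc r \<Longrightarrow> \<exists>F G. monochromatic_cube \<psi> P F G L"
    and I: "finite I" "r + n \<le> card I" and colours: "card (\<theta> ` Pow I) \<le> r"
  shows "\<exists>F G. monochromatic_cube \<theta> I F G (Suc L)"
proof -
  obtain A where A: "A \<subseteq> I" "card A = r"
    using obtain_subset_with_card_n[of r I] I by auto
  define P where "P = I - A"
  have P: "finite P" "n \<le> card P" "P \<subseteq> I"
    using I A unfolding P_def by (auto simp: card_Diff_subset finite_subset)
  have "finite A"
    using A(1) I(1) finite_subset by blast
  obtain E where E_sub: "\<And>k. k \<le> r \<Longrightarrow> E k \<subseteq> A"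
    and E_strict: "\<And>k k'. k < k' \<Longrightarrow> k' \<le> r \<Longrightarrow> E k \<subset> E k'"
    using finite_set_strict_chain[OF \<open>finite A\<close>, unfolded A(2)] by blast
  have E: "E k \<subseteq> I - P" if "k \<le> r" for k
    using E_sub[OF that] A unfolding P_def by blast
  define \<psi> where "\<psi> B = (\<lambda>k\<in>{..r}. \<theta> (E k \<union> B))" for B
  have "\<theta> (E k \<union> B) \<in> \<theta> ` Pow I" if "k \<le> r" "B \<subseteq> P" for k B
    using E[OF that(1)] that(2) P(3) by blast
  then have "\<psi> ` Pow P \<subseteq> {..r} \<rightarrow>\<^sub>E \<theta> ` Pow I"
    by (intro image_subsetI) (simp add: \<psi>_def restrict_PiE_iff)
  then have "card (\<psi> ` Pow P) \<le> card ({..r} \<rightarrow>\<^sub>E \<theta> ` Pow I)"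
    by (intro card_mono) (simp_all add: finite_PiE I)
  also have "\<dots> \<le> r ^ Suc r"
    using power_mono[OF colours, of "Suc r"] by (simp add: card_PiE del: power_Suc)
  finally have card_\<psi>: "card (\<psi> ` Pow P) \<le> r ^ Suc r" .
  obtain \<psi>' :: "_ \<Rightarrow> nat" where card_\<psi>': "card (\<psi>' ` Pow P) = card (\<psi> ` Pow P)"
    and \<psi>'_eq: "\<And>B B'. B \<in> Pow P \<Longrightarrow> B' \<in> Pow P \<Longrightarrow> \<psi>' B = \<psi>' B' \<longleftrightarrow> \<psi> B = \<psi> B'"
    using nat_recoding[of \<psi> "Pow P"] P by auto
  obtain F G where "monochromatic_cube \<psi>' P F G L"
    using IH[OF P(1,2), of \<psi>'] card_\<psi> card_\<psi>' by auto
  then have cube: "monochromatic_cube (\<lambda>B. \<theta> (E k \<union> B)) P F G L" if "k \<le> r" for k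
  proof (rule monochromatic_cube_coarsen)
    show "\<theta> (E k \<union> B) = \<theta> (E k \<union> B')" if "B \<subseteq> P" "B' \<subseteq> P" "\<psi>' B = \<psi>' B'" for B B'
      using \<psi>'_eq[of B B'] that \<open>k \<le> r\<close> unfolding \<psi>_def by (auto dest: fun_cong[of _ _ k])
  qed
  have "F \<subseteq> P"
    using cube[of 0] unfolding monochromatic_cube_def by simp
  then have "(\<lambda>k. \<theta> (E k \<union> F)) ` {..r} \<subseteq> \<theta> ` Pow I"
    using E P(3) by blast
  then obtain k k' where k: "k < k'" "k' \<le> r" and same: "\<theta> (E k \<union> F) = \<theta> (E k' \<union> F)"
    by (rule pigeonhole_atMost) (use colours I(1) in auto)
  then have "k \<le> r"
    by simp
  then show ?thesis
    using monochromatic_cube_Suc[OF E_strict[OF k] E[OF k(2)] P(3) cube cube[OF k(2)] same] by blast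
qed

(* The induction recolours by vectors of colours, so it is carried out for colours in nat;
   nat_recoding then transfers it to arbitrary colourings. *)
lemma monochromatic_cube_exists_nat:
  "\<exists>n. \<forall>(I::'a set) (\<theta>::'a set \<Rightarrow> nat). finite I \<longrightarrow> n \<le> card I \<longrightarrow> card (\<theta> ` Pow I) \<le> r \<longrightarrow>
     (\<exists>F G. monochromatic_cube \<theta> I F G L)"
proof (induction L arbitrary: r)
  case 0
  show ?case
    by (intro exI[of _ 0] allI impI exI[of _ "{}"])
      (simp add: monochromatic_cube_def disjoint_blocks_def disjoint_family_on_def)
next
  case (Suc L)
  then obtain n where "\<And>(P::'a set) (\<psi>::'a set \<Rightarrow> nat). finite P \<Longrightarrow> n \<le> card P \<Longrightarrow>
      card (\<psi> ` Pow P) \<le> r ^ Suc r \<Longrightarrow> \<exists>F G. monochromatic_cube \<psi> P F G L"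
    by blast
  then show ?case
    using monochromatic_cube_step by blast
qed

lemma monochromatic_cube_exists:
  "\<exists>n. \<forall>(I::'a set) (\<theta>::'a set \<Rightarrow> 'c). finite I \<longrightarrow> n \<le> card I \<longrightarrow> card (\<theta> ` Pow I) \<le> r \<longrightarrow>
     (\<exists>F G. monochromatic_cube \<theta> I F G L)"
proof -
  obtain n where n: "\<And>(I::'a set) (\<theta>::'a set \<Rightarrow> nat). finite I \<Longrightarrow> n \<le> card I \<Longrightarrow>
      card (\<theta> ` Pow I) \<le> r \<Longrightarrow> \<exists>F G. monochromatic_cube \<theta> I F G L"
    using monochromatic_cube_exists_nat by blast
  have "\<exists>F G. monochromatic_cube \<theta> I F G L"
    if I: "finite I" "n \<le> card I" and colours: "card (\<theta> ` Pow I) \<le> r"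
    for I :: "'a set" and \<theta> :: "'a set \<Rightarrow> 'c"
  proof -
    obtain \<theta>' :: "_ \<Rightarrow> nat" where card_\<theta>': "card (\<theta>' ` Pow I) = card (\<theta> ` Pow I)"
      and \<theta>'_eq: "\<And>A B. A \<in> Pow I \<Longrightarrow> B \<in> Pow I \<Longrightarrow> \<theta>' A = \<theta>' B \<longleftrightarrow> \<theta> A = \<theta> B"
      using nat_recoding[of \<theta> "Pow I"] I(1) by auto
    obtain F G where "monochromatic_cube \<theta>' I F G L"
      using n[OF I, of \<theta>'] card_\<theta>' colours by auto
    then have "monochromatic_cube \<theta> I F G L"
      by (rule monochromatic_cube_coarsen) (use \<theta>'_eq in auto)
    then show ?thesis
      by blast
  qed
  then show ?thesis
    by blast
qed

definition coloured_by_max :: "('a set \<Rightarrow> 'c) \<Rightarrow> (nat \<Rightarrow> 'a set) \<Rightarrow> nat \<Rightarrow> (nat \<Rightarrow> 'c) \<Rightarrow> bool" where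
  "coloured_by_max \<theta> D k col \<longleftrightarrow> (\<forall>S\<subseteq>{..<k}. S \<noteq> {} \<longrightarrow> \<theta> (\<Union>(D ` S)) = col (Max S))"

lemma disjoint_blocks_extend:
  assumes G: "disjoint_blocks (Suc m) (I - F) G" and "F \<subseteq> I"
    and D: "disjoint_blocks k {..<m} D"
  shows "disjoint_blocks (Suc k) I ((\<lambda>i. \<Union>(G ` D i))(k := F \<union> G m))"
proof -
  have Gm: "disjoint_blocks m (I - F) G" "G m \<noteq> {}" "G m \<subseteq> I - F" "\<forall>i<m. G i \<inter> G m = {}"
    using G unfolding disjoint_blocks_Suc by auto
  have low: "disjoint_blocks k (I - F) (\<lambda>i. \<Union>(G ` D i))"
    by (rule disjoint_blocks_compose[OF D Gm(1)])
  have "\<Union>(G ` D i) \<inter> (F \<union> G m) = {}" if "i < k" for i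
  proof -
    have "D i \<subseteq> {..<m}" "\<Union>(G ` D i) \<subseteq> I - F"
      using D low that unfolding disjoint_blocks_def by auto
    then show ?thesis
      using Gm(4) by blast
  qed
  moreover have "disjoint_blocks k I ((\<lambda>i. \<Union>(G ` D i))(k := F \<union> G m))"
    by (rule disjoint_blocks_cong[OF disjoint_blocks_mono[OF low]]) auto
  ultimately show ?thesis
    using Gm(2,3) \<open>F \<subseteq> I\<close> unfolding disjoint_blocks_Suc by auto
qed

lemma coloured_by_max_extend:
  assumes cube: "monochromatic_cube \<theta> I F G (Suc m)"
    and D: "disjoint_blocks k {..<m} D" and col: "coloured_by_max (\<lambda>Y. \<theta> (\<Union>(G ` Y))) D k col"
  shows "coloured_by_max \<theta> ((\<lambda>i. \<Union>(G ` D i))(k := F \<union> G m)) (Suc k) (col(k := \<theta> F))"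
  unfolding coloured_by_max_def
proof (intro allI impI)
  fix S assume S: "S \<subseteq> {..<Suc k}" "S \<noteq> {}"
  have "finite S"
    using S(1) finite_subset by blast
  let ?D = "(\<lambda>i. \<Union>(G ` D i))(k := F \<union> G m)"
  show "\<theta> (\<Union>(?D ` S)) = (col(k := \<theta> F)) (Max S)"
  proof (cases "k \<in> S")
    case True
    \<comment> \<open>The block \<open>F \<union> G m\<close> is present, so the union lies in the monochromatic cube of \<open>F\<close>.\<close>
    have "Max S = k"
      using S True \<open>finite S\<close> by (intro Max_eqI) auto
    define J where "J = insert m (\<Union>(D ` (S - {k})))"
    have "S - {k} \<subseteq> {..<k}"
      using S by auto
    then have "\<Union>(D ` (S - {k})) \<subseteq> {..<m}"
      by (rule disjoint_blocks_Union_subset[OF D])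
    then have "J \<subseteq> {..<Suc m}"
      unfolding J_def by auto
    moreover have "\<Union>(?D ` S) = ?D k \<union> \<Union>(?D ` (S - {k}))"
      using True by blast
    then have "\<Union>(?D ` S) = F \<union> \<Union>(G ` J)"
      unfolding J_def by auto
    ultimately show ?thesis
      using cube \<open>Max S = k\<close> unfolding monochromatic_cube_def by simp
  next
    case False
    then have "S \<subseteq> {..<k}"
      using S by (auto simp: less_Suc_eq)
    moreover have "\<Union>(?D ` S) = \<Union>(G ` \<Union>(D ` S))"
      using False by auto
    moreover have "Max S \<noteq> k"
      using Max_in[OF \<open>finite S\<close> S(2)] False by auto
    ultimately show ?thesis
      using col S unfolding coloured_by_max_def by simp
  qed
qed

lemma blocks_coloured_by_max_exist:
  "\<exists>n. \<forall>\<theta>::nat set \<Rightarrow> 'c. card (\<theta> ` Pow {..<n}) \<le> r \<longrightarrow>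
     (\<exists>D col. disjoint_blocks k {..<n} D \<and> coloured_by_max \<theta> D k col)"
proof (induction k)
  case 0
  show ?case
    by (simp add: disjoint_blocks_def disjoint_family_on_def coloured_by_max_def)
next
  case (Suc k)
  obtain m where m: "\<And>\<theta>::nat set \<Rightarrow> 'c. card (\<theta> ` Pow {..<m}) \<le> r \<Longrightarrow>
      \<exists>D col. disjoint_blocks k {..<m} D \<and> coloured_by_max \<theta> D k col"
    using Suc.IH by blast
  obtain n where n: "\<And>\<theta>::nat set \<Rightarrow> 'c. card (\<theta> ` Pow {..<n}) \<le> r \<Longrightarrow>
      \<exists>F G. monochromatic_cube \<theta> {..<n} F G (Suc m)"
    using monochromatic_cube_exists[of r "Suc m"] by (metis card_lessThan finite_lessThan order_refl)
  have "\<exists>D col. disjoint_blocks (Suc k) {..<n} D \<and> coloured_by_max \<theta> D (Suc k) col"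
    if colours: "card (\<theta> ` Pow {..<n}) \<le> r" for \<theta> :: "nat set \<Rightarrow> 'c"
  proof -
    obtain F G where cube: "monochromatic_cube \<theta> {..<n} F G (Suc m)"
      using n colours by blast
    then have F: "F \<subseteq> {..<n}" and G: "disjoint_blocks (Suc m) ({..<n} - F) G"
      unfolding monochromatic_cube_def by simp_all
    have "(\<lambda>Y. \<theta> (\<Union>(G ` Y))) ` Pow {..<m} \<subseteq> \<theta> ` Pow {..<n}"
    proof (rule image_subsetI)
      fix Y assume "Y \<in> Pow {..<m}"
      then have "Y \<subseteq> {..<Suc m}"
        by auto
      then have "\<Union>(G ` Y) \<subseteq> {..<n}"
        using disjoint_blocks_Union_subset[OF G] by blast
      then show "\<theta> (\<Union>(G ` Y)) \<in> \<theta> ` Pow {..<n}"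
        by blast
    qed
    then have "card ((\<lambda>Y. \<theta> (\<Union>(G ` Y))) ` Pow {..<m}) \<le> r"
      using card_mono[of "\<theta> ` Pow {..<n}"] colours by (meson finite_Pow_iff finite_imageI finite_lessThan le_trans)
    then obtain D col where "disjoint_blocks k {..<m} D" "coloured_by_max (\<lambda>Y. \<theta> (\<Union>(G ` Y))) D k col"
      using m by blast
    then show ?thesis
      using disjoint_blocks_extend[OF G F] coloured_by_max_extend[OF cube] by blast
  qed
  then show ?case
    by blast
qed

lemma monochromatic_subfamily:
  assumes D: "disjoint_blocks K I D" and col: "coloured_by_max \<theta> D K col"
    and many: "card (col ` {..<K}) * k < K"
  shows "\<exists>D' c. disjoint_blocks k I D' \<and> coloured_by_max \<theta> D' k (\<lambda>_. c)"
proof -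
  obtain c where c: "K \<le> card (col -` {c} \<inter> {..<K}) * card (col ` {..<K})"
    using pigeonhole_card[of col "{..<K}" "col ` {..<K}"] many by fastforce
  have "k \<le> card (col -` {c} \<inter> {..<K})"
  proof (rule ccontr)
    assume "\<not> k \<le> card (col -` {c} \<inter> {..<K})"
    then have "card (col -` {c} \<inter> {..<K}) * card (col ` {..<K}) \<le> card (col ` {..<K}) * k"
      by simp
    then show False
      using c many by linarith
  qed
  then obtain Q where Q: "Q \<subseteq> col -` {c} \<inter> {..<K}" "card Q = k"
    using obtain_subset_with_card_n by blast
  then obtain h where h: "bij_betw h {..<k} Q"
    using ex_bij_betw_nat_finite[of Q] by (auto simp: atLeast0LessThan finite_subset)
  have hQ: "h ` {..<k} \<subseteq> {..<K}"
    using h Q unfolding bij_betw_def by auto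
  have "disjoint_blocks k I (D \<circ> h)"
    using disjoint_blocks_reindex[OF D _ hQ] h unfolding bij_betw_def by blast
  moreover have "\<theta> (\<Union>((D \<circ> h) ` S)) = c" if S: "S \<subseteq> {..<k}" "S \<noteq> {}" for S
  proof -
    have "Max (h ` S) \<in> h ` S"
      using S by (intro Max_in) (auto simp: finite_subset)
    then have "col (Max (h ` S)) = c"
      using S h Q unfolding bij_betw_def by blast
    moreover have "h ` S \<subseteq> {..<K}" "h ` S \<noteq> {}"
      using S hQ by auto
    ultimately have "\<theta> (\<Union>(D ` h ` S)) = c"
      using col[unfolded coloured_by_max_def, rule_format, of "h ` S"] by simp
    then show ?thesis
      by (simp add: image_comp)
  qed
  ultimately show ?thesis
    unfolding coloured_by_max_def by blast
qed

theorem folkman_finite_unions: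
  "\<exists>n. \<forall>\<theta>::nat set \<Rightarrow> 'c. card (\<theta> ` Pow {..<n}) \<le> r \<longrightarrow>
     (\<exists>D c. disjoint_blocks k {..<n} D \<and> coloured_by_max \<theta> D k (\<lambda>_. c))"
proof -
  define K where "K = r * k + 1"
  obtain n where n: "\<And>\<theta>::nat set \<Rightarrow> 'c. card (\<theta> ` Pow {..<n}) \<le> r \<Longrightarrow>
      \<exists>D col. disjoint_blocks K {..<n} D \<and> coloured_by_max \<theta> D K col"
    using blocks_coloured_by_max_exist by blast
  have "\<exists>D c. disjoint_blocks k {..<n} D \<and> coloured_by_max \<theta> D k (\<lambda>_. c)"
    if colours: "card (\<theta> ` Pow {..<n}) \<le> r" for \<theta> :: "nat set \<Rightarrow> 'c"
  proof -
    obtain D col where D: "disjoint_blocks K {..<n} D" and col: "coloured_by_max \<theta> D K col"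
      using n colours by blast
    have "col i = \<theta> (D i)" "D i \<subseteq> {..<n}" if "i < K" for i
      using col D that unfolding coloured_by_max_def disjoint_blocks_def
      by (auto dest: spec[of _ "{i}"])
    then have "col ` {..<K} \<subseteq> \<theta> ` Pow {..<n}"
      by auto
    then have "card (col ` {..<K}) \<le> r"
      using card_mono[of "\<theta> ` Pow {..<n}"] colours by (meson finite_Pow_iff finite_imageI finite_lessThan le_trans)
    then have "card (col ` {..<K}) * k < K"
      unfolding K_def by (simp add: mult_le_mono1 less_Suc_eq_le)
    then show ?thesis
      using monochromatic_subfamily[OF D col] by blast
  qed
  then show ?thesis
    by blast
qed

section \<open>Regionally proximal pairs from block IP-sensitivity\<close>

definition cube_close :: "'a::metric_space set \<Rightarrow> ('a \<Rightarrow> 'a) \<Rightarrow> nat \<Rightarrow> real \<Rightarrow> 'a \<Rightarrow> 'a \<Rightarrow> bool" where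
  "cube_close X T d \<eta> x y \<longleftrightarrow> (\<exists>n::nat \<Rightarrow> int. \<forall>S. S \<subseteq> {0..<d} \<and> S \<noteq> {} \<longrightarrow>
     dist (ipow X T (\<Sum>i\<in>S. n i) x) (ipow X T (\<Sum>i\<in>S. n i) y) < \<eta>)"

lemma RP_iff:
  "(x, y) \<in> RP X T d \<longleftrightarrow> x \<in> X \<and> y \<in> X \<and>
     (\<forall>\<eta>>0. \<exists>x'\<in>X. \<exists>y'\<in>X. dist x x' < \<eta> \<and> dist y y' < \<eta> \<and> cube_close X T d \<eta> x' y')"
  by (simp add: RP_def cube_close_def)

lemma cube_close_mono:
  assumes "cube_close X T d \<eta> x y" "d' \<le> d" "\<eta> \<le> \<eta>'"
  shows "cube_close X T d' \<eta>' x y"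
proof -
  obtain n :: "nat \<Rightarrow> int" where n: "\<And>S. S \<subseteq> {0..<d} \<Longrightarrow> S \<noteq> {} \<Longrightarrow>
      dist (ipow X T (\<Sum>i\<in>S. n i) x) (ipow X T (\<Sum>i\<in>S. n i) y) < \<eta>"
    using assms(1) unfolding cube_close_def by blast
  have "dist (ipow X T (\<Sum>i\<in>S. n i) x) (ipow X T (\<Sum>i\<in>S. n i) y) < \<eta>'"
    if "S \<subseteq> {0..<d'}" "S \<noteq> {}" for S
    using n[of S] that assms(2,3) by fastforce
  then show ?thesis
    unfolding cube_close_def by blast
qed

lemma ipow_of_nat [simp]: "ipow X T (int m) = T ^^ m"
  by (simp add: ipow_def)

lemma funpow_in_invariant: "T ` X \<subseteq> X \<Longrightarrow> w \<in> X \<Longrightarrow> (T ^^ m) w \<in> X"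
  by (induction m) auto

lemma compact_finite_colouring_small_cells:
  fixes X :: "'a::metric_space set"
  assumes "compact X" "\<eta> > 0"
  obtains C and cell :: "'a \<Rightarrow> 'a"
  where "finite C" "cell ` X \<subseteq> C"
    "\<And>w w'. w \<in> X \<Longrightarrow> w' \<in> X \<Longrightarrow> cell w = cell w' \<Longrightarrow> dist w w' < \<eta>"
proof -
  have "X \<subseteq> (\<Union>c\<in>X. ball c (\<eta>/2))"
    using assms(2) by auto
  then obtain C where C: "C \<subseteq> X" "finite C" "X \<subseteq> (\<Union>c\<in>C. ball c (\<eta>/2))"
    using compactE_image[OF assms(1), of X "\<lambda>c. ball c (\<eta>/2)"] by auto
  define cell where "cell w = (SOME c. c \<in> C \<and> w \<in> ball c (\<eta>/2))" for w
  have cell: "cell w \<in> C \<and> w \<in> ball (cell w) (\<eta>/2)" if "w \<in> X" for w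
    unfolding cell_def by (rule someI_ex) (use C(3) that in blast)
  have "dist w w' < \<eta>" if "w \<in> X" "w' \<in> X" "cell w = cell w'" for w w'
  proof -
    have "dist w w' \<le> dist (cell w) w + dist (cell w) w'"
      by (rule dist_triangle3)
    also have "\<dots> < \<eta>/2 + \<eta>/2"
      using cell[OF that(1)] cell[OF that(2)] that(3) by (intro add_strict_mono) auto
    finally show ?thesis by simp
  qed
  with C(2) cell show ?thesis
    by (intro that[of C cell]) auto
qed

lemma cube_close_of_monochromatic_unions:
  assumes D: "disjoint_blocks (Suc d) I D" "finite I"
    and mono: "coloured_by_max (\<lambda>A. cell ((T ^^ sum p A) w)) D (Suc d) (\<lambda>_. c)"
    and cell: "\<And>w w'. w \<in> X \<Longrightarrow> w' \<in> X \<Longrightarrow> cell w = cell w' \<Longrightarrow> dist w w' < \<eta>"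
    and "T ` X \<subseteq> X" "w \<in> X"
  shows "cube_close X T d \<eta> ((T ^^ sum p (D 0)) w) w"
proof -
  define q where "q = sum p (D 0)"
  define m where "m i = int (sum p (D (Suc i)))" for i
  have "dist (ipow X T (\<Sum>i\<in>S. m i) ((T ^^ q) w)) (ipow X T (\<Sum>i\<in>S. m i) w) < \<eta>"
    if S: "S \<subseteq> {0..<d}" "S \<noteq> {}" for S
  proof -
    define s where "s = sum p (\<Union>(D ` Suc ` S))"
    have Suc_S: "Suc ` S \<subseteq> {..<Suc d}" "insert 0 (Suc ` S) \<subseteq> {..<Suc d}"
      using S by auto
    have "(\<Sum>i\<in>S. m i) = int s"
      unfolding m_def s_def sum_Union_disjoint_blocks[OF D Suc_S(1)]
      by (simp add: sum.reindex)
    moreover have "sum p (\<Union>(D ` insert 0 (Suc ` S))) = q + s"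
      unfolding s_def q_def sum_Union_disjoint_blocks[OF D Suc_S(1)]
        sum_Union_disjoint_blocks[OF D Suc_S(2)]
      using S finite_subset by (subst sum.insert) auto
    \<comment> \<open>The unions over \<open>{0} \<union> Suc ` S\<close> and over \<open>Suc ` S\<close> share the colour \<open>c\<close>.\<close>
    moreover have "cell ((T ^^ sum p (\<Union>(D ` insert 0 (Suc ` S)))) w) = cell ((T ^^ s) w)"
      using mono[unfolded coloured_by_max_def, rule_format, OF Suc_S(2)]
        mono[unfolded coloured_by_max_def, rule_format, OF Suc_S(1)] S(2)
      unfolding s_def by simp
    moreover have "(T ^^ s) ((T ^^ q) w) = (T ^^ (q + s)) w"
      by (metis add.commute comp_apply funpow_add)
    ultimately show ?thesis
      using cell funpow_in_invariant[OF assms(5,6)] by simp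
  qed
  then show ?thesis
    unfolding cube_close_def q_def by blast
qed

lemma IP_return_cube:
  fixes X :: "'a::metric_space set"
  assumes "compact X" "T ` X \<subseteq> X" "\<eta> > 0"
  shows "\<exists>n. \<forall>x\<in>X. \<forall>y\<in>X. \<forall>p. \<exists>q\<in>FS p n.
           cube_close X T d \<eta> ((T ^^ q) x) x \<and> cube_close X T d \<eta> ((T ^^ q) y) y"
proof -
  obtain C and cell :: "'a \<Rightarrow> 'a" where C: "finite C" "cell ` X \<subseteq> C"
    and cell: "\<And>w w'. w \<in> X \<Longrightarrow> w' \<in> X \<Longrightarrow> cell w = cell w' \<Longrightarrow> dist w w' < \<eta>"
    using compact_finite_colouring_small_cells[OF assms(1,3)] by blast
  obtain n where n: "\<And>\<theta>::nat set \<Rightarrow> 'a \<times> 'a. card (\<theta> ` Pow {..<n}) \<le> card (C \<times> C) \<Longrightarrow>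
      \<exists>D c. disjoint_blocks (Suc d) {..<n} D \<and> coloured_by_max \<theta> D (Suc d) (\<lambda>_. c)"
    using folkman_finite_unions[of "card (C \<times> C)" "Suc d"] by blast
  have "\<exists>q\<in>FS p n. cube_close X T d \<eta> ((T ^^ q) x) x \<and> cube_close X T d \<eta> ((T ^^ q) y) y"
    if x: "x \<in> X" and y: "y \<in> X" for x y p
  proof -
    define \<theta> where "\<theta> A = (cell ((T ^^ sum p A) x), cell ((T ^^ sum p A) y))" for A
    have "\<theta> ` Pow {..<n} \<subseteq> C \<times> C"
      unfolding \<theta>_def using C(2) funpow_in_invariant[OF assms(2)] x y by blast
    then have "card (\<theta> ` Pow {..<n}) \<le> card (C \<times> C)"
      by (rule card_mono[rotated]) (simp add: C(1))
    then obtain D c where D: "disjoint_blocks (Suc d) {..<n} D"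
      and mono: "coloured_by_max \<theta> D (Suc d) (\<lambda>_. c)"
      using n by blast
    have "D 0 \<noteq> {}" "D 0 \<subseteq> {0..<n}"
      using D unfolding disjoint_blocks_def atLeast0LessThan by blast+
    then have "sum p (D 0) \<in> FS p n"
      unfolding FS_def by blast
    moreover have "coloured_by_max (\<lambda>A. cell ((T ^^ sum p A) x)) D (Suc d) (\<lambda>_. fst c)"
      and "coloured_by_max (\<lambda>A. cell ((T ^^ sum p A) y)) D (Suc d) (\<lambda>_. snd c)"
      using mono unfolding coloured_by_max_def \<theta>_def by (simp_all add: prod_eq_iff)
    then have "cube_close X T d \<eta> ((T ^^ sum p (D 0)) x) x"
      and "cube_close X T d \<eta> ((T ^^ sum p (D 0)) y) y"
      using cube_close_of_monochromatic_unions[where cell = cell, OF D finite_lessThan _ cell assms(2)] x y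
      by blast+
    ultimately show ?thesis
      by blast
  qed
  then show ?thesis
    by blast
qed

lemma block_sensitive_far_cube_close_pair:
  fixes X :: "'a::metric_space set"
  assumes "tds X T" "block_Fip_sensitive X T (10 * \<delta>)" "x \<in> X" "0 < r" "r \<le> \<delta>" "\<eta> > 0"
  shows "\<exists>u\<in>X. \<exists>v\<in>X. dist x v < r \<and> \<delta> \<le> dist u v \<and> cube_close X T d \<eta> u v"
proof -
  have X: "compact X" "T ` X \<subseteq> X"
    using assms(1) unfolding tds_def by auto
  obtain n where n: "\<And>x y p. x \<in> X \<Longrightarrow> y \<in> X \<Longrightarrow> \<exists>q\<in>FS p n.
      cube_close X T d \<eta> ((T ^^ q) x) x \<and> cube_close X T d \<eta> ((T ^^ q) y) y"
    using IP_return_cube[OF X assms(6), of d] by blast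
  have "open (ball x r)" "x \<in> ball x r"
    using assms(4) by auto
  then obtain y where y: "y \<in> ball x r \<inter> X"
    and "contains_finite_IP {n. dist ((T ^^ n) x) ((T ^^ n) y) > 10 * \<delta>} n"
    using assms(2,3) unfolding block_Fip_sensitive_def by blast
  then obtain p where p: "FS p n \<subseteq> {n. dist ((T ^^ n) x) ((T ^^ n) y) > 10 * \<delta>}"
    unfolding contains_finite_IP_def by blast
  obtain q where "q \<in> FS p n" and cubes: "cube_close X T d \<eta> ((T ^^ q) x) x"
    "cube_close X T d \<eta> ((T ^^ q) y) y"
    using n[OF assms(3), of y p] y by blast
  then have "10 * \<delta> < dist ((T ^^ q) x) ((T ^^ q) y)"
    using p by blast
  moreover have "dist ((T ^^ q) x) ((T ^^ q) y) \<le> dist ((T ^^ q) x) x + dist x y + dist ((T ^^ q) y) y"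
    using dist_triangle[of "(T ^^ q) x" "(T ^^ q) y" x] dist_triangle[of x "(T ^^ q) y" y]
    by (simp add: dist_commute)
  moreover have "dist x y < \<delta>"
    using y assms(5) by auto
  ultimately have "\<delta> \<le> dist ((T ^^ q) x) x \<or> \<delta> \<le> dist ((T ^^ q) y) y"
    using assms(4,5) by linarith
  moreover have "(T ^^ q) x \<in> X" "(T ^^ q) y \<in> X" "dist x x < r" "dist x y < r" "y \<in> X"
    using funpow_in_invariant[OF X(2)] assms(3,4) y by auto
  ultimately show ?thesis
    using cubes assms(3) by blast
qed

lemma RP_inf_of_subseq_limit:
  assumes cubes: "\<And>k. cube_close X T k (inverse (Suc k)) (u k) (v k)"
    and "strict_mono \<phi>" and lim: "(u \<circ> \<phi>) \<longlonglongrightarrow> a" "(v \<circ> \<phi>) \<longlonglongrightarrow> b"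
    and "\<And>k. u k \<in> X" "\<And>k. v k \<in> X" "a \<in> X" "b \<in> X"
  shows "(a, b) \<in> RP_inf X T"
proof -
  have "(a, b) \<in> RP X T d" for d
    unfolding RP_iff
  proof (intro conjI allI impI assms)
    fix \<eta> :: real assume "\<eta> > 0"
    obtain N where N: "inverse (real (Suc N)) < \<eta>"
      using reals_Archimedean[OF \<open>\<eta> > 0\<close>] by blast
    have "eventually (\<lambda>k. cube_close X T d \<eta> (u (\<phi> k)) (v (\<phi> k))) sequentially"
      unfolding eventually_sequentially
    proof (intro exI allI impI)
      fix k assume "max d N \<le> k"
      moreover have "k \<le> \<phi> k"
        using seq_suble[OF \<open>strict_mono \<phi>\<close>] by blast
      ultimately have "d \<le> \<phi> k" "N \<le> \<phi> k"
        by simp_all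
      have "inverse (real (Suc (\<phi> k))) \<le> inverse (real (Suc N))"
        by (rule le_imp_inverse_le) (use \<open>N \<le> \<phi> k\<close> in auto)
      then have "inverse (real (Suc (\<phi> k))) \<le> \<eta>"
        using N by linarith
      then show "cube_close X T d \<eta> (u (\<phi> k)) (v (\<phi> k))"
        using cube_close_mono[OF cubes \<open>d \<le> \<phi> k\<close>] by blast
    qed
    moreover have "eventually (\<lambda>k. dist ((u \<circ> \<phi>) k) a < \<eta>) sequentially"
      "eventually (\<lambda>k. dist ((v \<circ> \<phi>) k) b < \<eta>) sequentially"
      using lim \<open>\<eta> > 0\<close> unfolding tendsto_iff by blast+
    ultimately have "eventually (\<lambda>k. cube_close X T d \<eta> (u (\<phi> k)) (v (\<phi> k)) \<and>
        dist ((u \<circ> \<phi>) k) a < \<eta> \<and> dist ((v \<circ> \<phi>) k) b < \<eta>) sequentially"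
      by (intro eventually_conj)
    then obtain k where "cube_close X T d \<eta> (u (\<phi> k)) (v (\<phi> k))"
      "dist a (u (\<phi> k)) < \<eta>" "dist b (v (\<phi> k)) < \<eta>"
      unfolding eventually_sequentially by (auto simp: dist_commute)
    then show "\<exists>x'\<in>X. \<exists>y'\<in>X. dist a x' < \<eta> \<and> dist b y' < \<eta> \<and> cube_close X T d \<eta> x' y'"
      using assms by blast
  qed
  then show ?thesis
    unfolding RP_inf_def by blast
qed

lemma RP_inf_far_pair_near_point:
  fixes X :: "'a::metric_space set"
  assumes "compact X"
    and far: "\<And>d \<eta>. \<eta> > 0 \<Longrightarrow> \<exists>u\<in>X. \<exists>v\<in>X. dist x v < r \<and> \<delta> \<le> dist u v \<and> cube_close X T d \<eta> u v"
  shows "\<exists>y\<in>X. \<exists>z\<in>X. (y, z) \<in> RP_inf X T \<and> dist x z \<le> r \<and> \<delta> \<le> dist z y"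
proof -
  have "\<exists>u v. u \<in> X \<and> v \<in> X \<and> dist x v < r \<and> \<delta> \<le> dist u v \<and>
      cube_close X T k (inverse (Suc k)) u v" for k
    using far[of "inverse (Suc k)" k] by auto
  then obtain u v where uv: "\<And>k. u k \<in> X" "\<And>k. v k \<in> X" "\<And>k. dist x (v k) < r"
    "\<And>k. \<delta> \<le> dist (u k) (v k)" "\<And>k. cube_close X T k (inverse (Suc k)) (u k) (v k)"
    by metis
  have "seq_compact (X \<times> X)"
    using assms(1) by (simp add: compact_Times compact_imp_seq_compact)
  moreover have "\<forall>k. (u k, v k) \<in> X \<times> X"
    using uv(1,2) by simp
  ultimately obtain l \<phi> where "l \<in> X \<times> X" "strict_mono \<phi>"
    and lim: "((\<lambda>k. (u k, v k)) \<circ> \<phi>) \<longlonglongrightarrow> l"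
    by (rule seq_compactE)
  obtain y z where "l = (y, z)"
    by (cases l)
  then have yz: "y \<in> X" "z \<in> X" and lim_u: "(u \<circ> \<phi>) \<longlonglongrightarrow> y" and lim_v: "(v \<circ> \<phi>) \<longlonglongrightarrow> z"
    using \<open>l \<in> X \<times> X\<close> tendsto_fst[OF lim] tendsto_snd[OF lim] by (simp_all add: comp_def)
  have "dist x z \<le> r"
  proof (rule LIMSEQ_le_const2)
    show "(\<lambda>k. dist x ((v \<circ> \<phi>) k)) \<longlonglongrightarrow> dist x z"
      by (intro tendsto_intros lim_v)
  qed (use uv(3) less_imp_le in auto)
  moreover have "\<delta> \<le> dist z y"
    using tendsto_dist[OF lim_v lim_u] uv(4) by (intro LIMSEQ_le_const) (auto simp: dist_commute)
  moreover have "(y, z) \<in> RP_inf X T"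
    using RP_inf_of_subseq_limit[OF uv(5) \<open>strict_mono \<phi>\<close> lim_u lim_v uv(1,2) yz] .
  ultimately show ?thesis
    using yz by blast
qed

theorem proposition4p11:
  fixes X :: "'a::metric_space set" and T :: "'a \<Rightarrow> 'a" and \<delta> :: real
    and x :: 'a and U :: "'a set"
  assumes "tds X T"
    and "\<exists>S. homeomorphism X X T S"
    and "minimal_sys X T"
    and "\<delta> > 0"
    and "block_Fip_sensitive X T (10 * \<delta>)"
    and "x \<in> X"
    and "open U" and "x \<in> U"
  shows "\<exists>z\<in>U \<inter> X. \<exists>y\<in>X. (y, z) \<in> RP_inf X T \<and> dist z y \<ge> \<delta>"
proof -
  obtain e where "e > 0" "ball x e \<subseteq> U"
    using assms(7,8) open_contains_ball by blast
  define r where "r = min (e / 2) \<delta>"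
  have r: "0 < r" "r \<le> \<delta>" "r < e"
    using \<open>e > 0\<close> assms(4) unfolding r_def by auto
  have "compact X"
    using assms(1) unfolding tds_def by simp
  then obtain y z where "y \<in> X" "z \<in> X" "(y, z) \<in> RP_inf X T" "dist x z \<le> r" "\<delta> \<le> dist z y"
    using RP_inf_far_pair_near_point[OF _ block_sensitive_far_cube_close_pair[OF assms(1,5,6) r(1,2)]]
    by blast
  moreover have "z \<in> U"
    using \<open>dist x z \<le> r\<close> r(3) \<open>ball x e \<subseteq> U\<close> by auto
  ultimately show ?thesis
    by blast
qed

end
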